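(* Let $\Omega\subset\mathbb{R}^N$, $N\ge2$, be a bounded domain with boundary of class $\mathcal{C}^{1,1}$. Let $c_+,c_-,h^+\in L^q(\Omega)$ for some $q>N/2$ and $\mu,h^-\in L^\infty(\Omega)$, with $c_+\ge0$, $c_-\ge0$, $c_+c_-=0$ a.e. in $\Omega$, $|\Omega_+|>0$ where $\Omega_+:=\operatorname{Supp}(c_+)$, and assume there exist $\epsilon>0$, $\mu_1>0$ such that $\mu\ge\mu_1$ and $c_-=0$ a.e. in $\{x\in\Omega:d(x,\Omega_+)<\epsilon\}$. For $\lambda\in\mathbb{R}$ consider $$(P_\lambda)\qquad -\Delta u=(\lambda c_+(x)-c_-(x))u+\mu(x)|\nabla u|^2+h(x),\qquad u\in H_0^1(\Omega)\cap L^\infty(\Omega).$$ Assume $(P_0)$ has a solution $u_0$ for which there exist $\overline x\in\Omega$ and $R>0$ with $B_R(\overline x)\subset\Omega$ such that $c_+u_0\gneqq0$, $c_-\equiv0$ and $\mu\ge0$ in $B_R(\overline x)$. Then there exists $\overline\Lambda\in(0,\infty)$ such that, for every $\lambda\ge\overline\Lambda$, problem $(P_\lambda)$ has no solution $u$ with $u\ge u_0$ in $B_R(\overline x)$.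
   Context: $h^\pm=\max(\pm h,0)$. For $f\in L^p(\Omega)$, $\operatorname{Supp}(f)$ is the complement in $\Omega$ of the largest open set on which $f=0$ a.e. A solution of $(P_\lambda)$ is $u\in H_0^1(\Omega)\cap L^\infty(\Omega)$ with $\int_\Omega\nabla u\cdot\nabla\varphi=\int_\Omega[(\lambda c_+-c_-)u+\mu|\nabla u|^2+h]\varphi$ for all $\varphi\in H_0^1(\Omega)\cap L^\infty(\Omega)$. "$c_+u_0\gneqq0$ in $B_R(\overline x)$" means $c_+u_0\ge0$ a.e. in $B_R(\overline x)$ and $c_+u_0>0$ on a subset of $B_R(\overline x)$ of positive measure. *)

theory Defs
  imports "HOL-Analysis.Analysis"
begin

definition Lp_on :: "'a::euclidean_space set \<Rightarrow> real \<Rightarrow> ('a \<Rightarrow> real) \<Rightarrow> bool" where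
  "Lp_on \<Omega> q f \<longleftrightarrow> f \<in> borel_measurable (lebesgue_on \<Omega>)
      \<and> integrable (lebesgue_on \<Omega>) (\<lambda>x. \<bar>f x\<bar> powr q)"

definition Linf_on :: "'a::euclidean_space set \<Rightarrow> ('a \<Rightarrow> real) \<Rightarrow> bool" where
  "Linf_on \<Omega> f \<longleftrightarrow> f \<in> borel_measurable (lebesgue_on \<Omega>)
      \<and> (\<exists>C. AE x in lebesgue. x \<in> \<Omega> \<longrightarrow> \<bar>f x\<bar> \<le> C)"

text \<open>C^infinity functions: all iterated directional derivatives exist everywhere.\<close>
definition smooth_fun :: "('a::euclidean_space \<Rightarrow> real) \<Rightarrow> bool" where
  "smooth_fun f \<longleftrightarrow> (\<exists>F. f \<in> F \<and> (\<forall>g\<in>F. (\<forall>x. g differentiable (at x))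
      \<and> (\<forall>v. (\<lambda>x. frechet_derivative g (at x) v) \<in> F)))"

definition grad :: "('a::euclidean_space \<Rightarrow> real) \<Rightarrow> 'a \<Rightarrow> 'a" where
  "grad f x = (\<Sum>i\<in>Basis. frechet_derivative f (at x) i *\<^sub>R i)"

definition test_fun :: "'a::euclidean_space set \<Rightarrow> ('a \<Rightarrow> real) \<Rightarrow> bool" where
  "test_fun \<Omega> \<phi> \<longleftrightarrow> smooth_fun \<phi> \<and> compact (closure {x. \<phi> x \<noteq> 0})
      \<and> closure {x. \<phi> x \<noteq> 0} \<subseteq> \<Omega>"

definition weak_grad :: "'a::euclidean_space set \<Rightarrow> ('a \<Rightarrow> real) \<Rightarrow> ('a \<Rightarrow> 'a) \<Rightarrow> bool" where
  "weak_grad \<Omega> u G \<longleftrightarrow> (\<forall>\<phi>. test_fun \<Omega> \<phi> \<longrightarrow> (\<forall>i\<in>Basis.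
      (LINT x:\<Omega>|lebesgue. u x * frechet_derivative \<phi> (at x) i)
      = - (LINT x:\<Omega>|lebesgue. (G x \<bullet> i) * \<phi> x)))"

text \<open>u belongs to H_0^1(Omega) (closure of C_c^infinity(Omega) in the H^1 norm), with weak gradient G.\<close>
definition H01 :: "'a::euclidean_space set \<Rightarrow> ('a \<Rightarrow> real) \<Rightarrow> ('a \<Rightarrow> 'a) \<Rightarrow> bool" where
  "H01 \<Omega> u G \<longleftrightarrow> Lp_on \<Omega> 2 u \<and> G \<in> borel_measurable (lebesgue_on \<Omega>)
      \<and> (\<forall>i\<in>Basis. Lp_on \<Omega> 2 (\<lambda>x. G x \<bullet> i)) \<and> weak_grad \<Omega> u G
      \<and> (\<exists>\<phi>s. (\<forall>k. test_fun \<Omega> (\<phi>s k)) \<and>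
           (\<lambda>k. LINT x:\<Omega>|lebesgue. (\<phi>s k x - u x)\<^sup>2 + (norm (grad (\<phi>s k) x - G x))\<^sup>2)
             \<longlonglongrightarrow> 0)"

definition C11_on :: "'a::euclidean_space set \<Rightarrow> ('a \<Rightarrow> real) \<Rightarrow> bool" where
  "C11_on S g \<longleftrightarrow> (\<exists>g' L. (\<forall>x\<in>S. (g has_derivative g' x) (at x within S))
      \<and> (\<forall>x\<in>S. \<forall>y\<in>S. onorm (\<lambda>v. g' x v - g' y v) \<le> L * dist x y))"

text \<open>Boundary of class C^{1,1}: near each boundary point Omega is the supergraph of a
  C^{1,1} function defined on a hyperplane (in some rotated coordinate system).\<close>
definition C11_boundary :: "'a::euclidean_space set \<Rightarrow> bool" where
  "C11_boundary \<Omega> \<longleftrightarrow> (\<forall>x0\<in>frontier \<Omega>. \<exists>r>0. \<exists>e. norm e = 1 \<and>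
      (\<exists>\<gamma>. C11_on {y. y \<bullet> e = 0} \<gamma> \<and>
         \<Omega> \<inter> ball x0 r = {x \<in> ball x0 r. x \<bullet> e > \<gamma> (x - (x \<bullet> e) *\<^sub>R e)}))"

definition ess_supp :: "'a::euclidean_space set \<Rightarrow> ('a \<Rightarrow> real) \<Rightarrow> 'a set" where
  "ess_supp \<Omega> f = \<Omega> - \<Union>{U. open U \<and> U \<subseteq> \<Omega> \<and> (AE x in lebesgue. x \<in> U \<longrightarrow> f x = 0)}"

definition is_solution :: "'a::euclidean_space set \<Rightarrow> ('a \<Rightarrow> real) \<Rightarrow> ('a \<Rightarrow> real) \<Rightarrow>
    ('a \<Rightarrow> real) \<Rightarrow> ('a \<Rightarrow> real) \<Rightarrow> real \<Rightarrow> ('a \<Rightarrow> real) \<Rightarrow> bool" where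
  "is_solution \<Omega> cp cm mu h lam u \<longleftrightarrow> (\<exists>G. H01 \<Omega> u G \<and> Linf_on \<Omega> u \<and>
     (\<forall>\<phi> G\<phi>. H01 \<Omega> \<phi> G\<phi> \<and> Linf_on \<Omega> \<phi> \<longrightarrow>
        (LINT x:\<Omega>|lebesgue. G x \<bullet> G\<phi> x)
        = (LINT x:\<Omega>|lebesgue. ((lam * cp x - cm x) * u x + mu x * (norm (G x))\<^sup>2 + h x) * \<phi> x)))"

end

theory Submission
  imports Defs "HOL-Computational_Algebra.Polynomial"
begin

text \<open>
  Test the equation with the bump \<open>w(x) = exp (-1 / (r\<^sup>2 - |x - xbar|\<^sup>2))\<close> on a ball
  \<open>B\<^sub>r(xbar)\<close>, \<open>r < R\<close> so that the closed ball lies in \<open>\<Omega>\<close>, on which \<open>c\<^sub>+ u\<^sub>0 > 0\<close> on a set of positive measure.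
  Since \<open>|\<nabla>w|\<^sup>2 \<le> 1024 r\<^sup>2 w\<close>, Young's inequality gives
  \<open>|\<nabla>u \<cdot> \<nabla>w| \<le> \<mu>\<^sub>1 |\<nabla>u|\<^sup>2 w + 256 r\<^sup>2 / \<mu>\<^sub>1\<close>, so the quadratic gradient term
  of the equation absorbs the left-hand side and, as \<open>c\<^sub>-\<close> vanishes on the ball,
  \<open>\<lambda> \<integral> c\<^sub>+ u w + \<integral> h w \<le> 256 r\<^sup>2 |\<Omega>| / \<mu>\<^sub>1\<close>.
  If \<open>u \<ge> u\<^sub>0\<close> on the ball then \<open>\<integral> c\<^sub>+ u w \<ge> \<integral> c\<^sub>+ u\<^sub>0 w > 0\<close>, which bounds \<open>\<lambda>\<close>.
\<close>

section \<open>A smooth bump function\<close>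

text \<open>The functions \<open>t \<mapsto> p(1/t) exp(-1/t)\<close>, extended by \<open>0\<close> for \<open>t \<le> 0\<close>, are closed under
  differentiation; this is how smoothness of the bump is proved.\<close>
definition flat_exp :: "real poly \<Rightarrow> real \<Rightarrow> real" where
  "flat_exp p t = (if t > 0 then poly p (inverse t) * exp (- inverse t) else 0)"

definition flat_exp_dpoly :: "real poly \<Rightarrow> real poly" where
  "flat_exp_dpoly p = [:0, 0, 1:] * (p - pderiv p)"

lemma poly_times_exp_neg_tendsto_0: "((\<lambda>s::real. poly p s * exp (- s)) \<longlongrightarrow> 0) at_top"
proof -
  have "((\<lambda>s::real. \<Sum>i\<le>degree p. coeff p i * (s ^ i / exp s)) \<longlongrightarrow> (\<Sum>i\<le>degree p. coeff p i * 0)) at_top"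
    by (intro tendsto_sum tendsto_mult tendsto_const tendsto_power_div_exp_0)
  moreover have "(\<lambda>s. \<Sum>i\<le>degree p. coeff p i * (s ^ i / exp s)) = (\<lambda>s. poly p s * exp (- s))"
    by (auto simp: poly_altdef sum_distrib_right exp_minus field_simps sum_divide_distrib)
  ultimately show ?thesis by simp
qed

lemma flat_exp_has_real_derivative: "(flat_exp p has_real_derivative flat_exp (flat_exp_dpoly p) t) (at t)"
proof -
  consider "t > 0" | "t < 0" | "t = 0" by linarith
  then show ?thesis
  proof cases
    case 1
    let ?f = "\<lambda>t. poly p (inverse t) * exp (- inverse t)"
    have d: "(?f has_real_derivative
        (poly (pderiv p) (inverse t) * (- (inverse t ^ 2)) * exp (- inverse t)
         + poly p (inverse t) * (exp (- inverse t) * (inverse t ^ 2)))) (at t)"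
      using 1 by (auto intro!: derivative_eq_intros DERIV_chain2[OF poly_DERIV] simp: power2_eq_square)
    have e: "flat_exp (flat_exp_dpoly p) t
        = poly (pderiv p) (inverse t) * (- (inverse t ^ 2)) * exp (- inverse t)
          + poly p (inverse t) * (exp (- inverse t) * (inverse t ^ 2))"
      using 1 by (simp add: flat_exp_def flat_exp_dpoly_def algebra_simps power2_eq_square)
    show ?thesis unfolding e
      by (rule has_field_derivative_transform_within_open[OF d, of "{0<..}"])
         (use 1 in \<open>auto simp: flat_exp_def\<close>)
  next
    case 2
    then have e: "flat_exp (flat_exp_dpoly p) t = 0" by (simp add: flat_exp_def)
    show ?thesis unfolding e
      by (rule has_field_derivative_transform_within_open[OF DERIV_const, of "{..<0}"])
         (use 2 in \<open>auto simp: flat_exp_def\<close>)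
  next
    case 3
    have left: "((\<lambda>y. (flat_exp p y - flat_exp p 0) / (y - 0)) \<longlongrightarrow> 0) (at_left 0)"
    proof (rule Lim_transform_eventually[OF tendsto_const])
      have "eventually (\<lambda>y::real. y < 0) (at_left 0)" by (simp add: eventually_at_filter)
      then show "\<forall>\<^sub>F y in at_left 0. 0 = (flat_exp p y - flat_exp p 0) / (y - 0)"
        by eventually_elim (auto simp: flat_exp_def)
    qed
    have "((\<lambda>y. poly ([:0, 1:] * p) (inverse y) * exp (- inverse y)) \<longlongrightarrow> 0) (at_right 0)"
      using filterlim_compose[OF poly_times_exp_neg_tendsto_0[of "[:0, 1:] * p"] filterlim_inverse_at_top_right]
      by simp
    then have right: "((\<lambda>y. (flat_exp p y - flat_exp p 0) / (y - 0)) \<longlongrightarrow> 0) (at_right 0)"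
    proof (rule Lim_transform_eventually)
      have "eventually (\<lambda>y::real. y > 0) (at_right 0)" by (simp add: eventually_at_filter)
      then show "\<forall>\<^sub>F y in at_right 0.
          poly ([:0, 1:] * p) (inverse y) * exp (- inverse y) = (flat_exp p y - flat_exp p 0) / (y - 0)"
        by eventually_elim (auto simp: flat_exp_def field_simps)
    qed
    have "flat_exp (flat_exp_dpoly p) 0 = 0" by (simp add: flat_exp_def)
    with filterlim_split_at_real[OF left right] show ?thesis
      unfolding 3 has_field_derivative_iff by simp
  qed
qed

inductive_set bump_algebra :: "'a::euclidean_space \<Rightarrow> real \<Rightarrow> ('a \<Rightarrow> real) set"
  for c :: 'a and r :: real where
  const: "(\<lambda>x. k) \<in> bump_algebra c r"
| inner: "(\<lambda>x. x \<bullet> v) \<in> bump_algebra c r"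
| flat_exp: "(\<lambda>x. flat_exp p (r\<^sup>2 - (x - c) \<bullet> (x - c))) \<in> bump_algebra c r"
| add: "f \<in> bump_algebra c r \<Longrightarrow> g \<in> bump_algebra c r \<Longrightarrow> (\<lambda>x. f x + g x) \<in> bump_algebra c r"
| mult: "f \<in> bump_algebra c r \<Longrightarrow> g \<in> bump_algebra c r \<Longrightarrow> (\<lambda>x. f x * g x) \<in> bump_algebra c r"

lemma flat_exp_sphere_has_derivative:
  "((\<lambda>x. flat_exp p (r\<^sup>2 - (x - c) \<bullet> (x - c))) has_derivative
    (\<lambda>v. - 2 * flat_exp (flat_exp_dpoly p) (r\<^sup>2 - (x - c) \<bullet> (x - c)) * ((x - c) \<bullet> v))) (at x)"
proof -
  have "((\<lambda>x. r\<^sup>2 - (x - c) \<bullet> (x - c)) has_derivative (\<lambda>v. - (2 * ((x - c) \<bullet> v)))) (at x)"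
    by (auto intro!: derivative_eq_intros simp: inner_commute)
  from has_derivative_compose[OF this flat_exp_has_real_derivative[unfolded has_field_derivative_def]]
  show ?thesis by (simp add: mult_ac)
qed

lemma bump_algebra_has_derivative:
  assumes "f \<in> bump_algebra c r"
  shows "\<exists>f'. (\<forall>x. (f has_derivative f' x) (at x)) \<and> (\<forall>v. (\<lambda>x. f' x v) \<in> bump_algebra c r)"
  using assms
proof induction
  case (const k)
  show ?case by (intro exI[of _ "\<lambda>x v. 0"]) (simp add: bump_algebra.const)
next
  case (inner w)
  show ?case
    by (intro exI[of _ "\<lambda>x v. v \<bullet> w"] conjI allI bounded_linear.has_derivative[OF bounded_linear_inner_left])
       (auto simp: inner_commute intro: bump_algebra.const)
next
  case (flat_exp p)
  let ?q = "flat_exp_dpoly p"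
  have closed: "(\<lambda>x. - 2 * flat_exp ?q (r\<^sup>2 - (x - c) \<bullet> (x - c)) * ((x - c) \<bullet> v)) \<in> bump_algebra c r" for v
  proof -
    have "(\<lambda>x. flat_exp ?q (r\<^sup>2 - (x - c) \<bullet> (x - c)) * (x \<bullet> (- 2 *\<^sub>R v) + 2 * (c \<bullet> v)))
        \<in> bump_algebra c r"
      by (intro bump_algebra.mult bump_algebra.add bump_algebra.flat_exp bump_algebra.inner bump_algebra.const)
    moreover have "(\<lambda>x. flat_exp ?q (r\<^sup>2 - (x - c) \<bullet> (x - c)) * (x \<bullet> (- 2 *\<^sub>R v) + 2 * (c \<bullet> v)))
        = (\<lambda>x. - 2 * flat_exp ?q (r\<^sup>2 - (x - c) \<bullet> (x - c)) * ((x - c) \<bullet> v))"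
      by (auto simp: inner_diff_left algebra_simps)
    ultimately show ?thesis by simp
  qed
  show ?case
    by (intro exI[of _ "\<lambda>x v. - 2 * flat_exp ?q (r\<^sup>2 - (x - c) \<bullet> (x - c)) * ((x - c) \<bullet> v)"]
        conjI allI flat_exp_sphere_has_derivative closed)
next
  case (add f g)
  then obtain f' g' where f: "\<forall>x. (f has_derivative f' x) (at x)" "\<forall>v. (\<lambda>x. f' x v) \<in> bump_algebra c r"
    and g: "\<forall>x. (g has_derivative g' x) (at x)" "\<forall>v. (\<lambda>x. g' x v) \<in> bump_algebra c r" by blast
  show ?case
    by (intro exI[of _ "\<lambda>x v. f' x v + g' x v"] conjI allI has_derivative_add bump_algebra.add)
       (use f g in auto)
next
  case (mult f g)
  then obtain f' g' where f: "\<forall>x. (f has_derivative f' x) (at x)" "\<forall>v. (\<lambda>x. f' x v) \<in> bump_algebra c r"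
    and g: "\<forall>x. (g has_derivative g' x) (at x)" "\<forall>v. (\<lambda>x. g' x v) \<in> bump_algebra c r" by blast
  show ?case
    by (intro exI[of _ "\<lambda>x v. f x * g' x v + f' x v * g x"] conjI allI has_derivative_mult
        bump_algebra.add bump_algebra.mult)
       (use f g mult.hyps in auto)
qed

lemma smooth_fun_bump_algebra:
  assumes "f \<in> bump_algebra c r"
  shows "smooth_fun f"
  unfolding smooth_fun_def
proof (intro exI[of _ "bump_algebra c r"] conjI ballI allI)
  fix g x assume "g \<in> bump_algebra c r"
  then show "g differentiable at x"
    using bump_algebra_has_derivative by (metis differentiableI)
next
  fix g v assume "g \<in> bump_algebra c r"
  then obtain g' where "\<forall>x. (g has_derivative g' x) (at x)" "\<forall>v. (\<lambda>x. g' x v) \<in> bump_algebra c r"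
    using bump_algebra_has_derivative by blast
  moreover from this(1) have "(\<lambda>x. frechet_derivative g (at x) v) = (\<lambda>x. g' x v)"
    using frechet_derivative_at by metis
  ultimately show "(\<lambda>x. frechet_derivative g (at x) v) \<in> bump_algebra c r" by simp
qed (fact assms)

definition bump :: "'a::euclidean_space \<Rightarrow> real \<Rightarrow> 'a \<Rightarrow> real" where
  "bump c r x = flat_exp 1 (r\<^sup>2 - (x - c) \<bullet> (x - c))"

lemma flat_exp_1: "flat_exp 1 t = (if t > 0 then exp (- inverse t) else 0)"
  by (simp add: flat_exp_def)

lemma flat_exp_dpoly_1: "flat_exp (flat_exp_dpoly 1) t = (if t > 0 then (inverse t)\<^sup>2 * exp (- inverse t) else 0)"
  by (simp add: flat_exp_def flat_exp_dpoly_def power2_eq_square)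

lemma flat_exp_dpoly_1_sq_le: "(flat_exp (flat_exp_dpoly 1) t)\<^sup>2 \<le> 256 * flat_exp 1 t"
proof (cases "t > 0")
  case True
  define s where "s = inverse t"
  have s: "s > 0" using True by (simp add: s_def)
  have "s / 4 \<le> exp (s / 4)" using exp_ge_add_one_self[of "s / 4"] by linarith
  then have "(s / 4) ^ 4 \<le> exp (s / 4) ^ 4" using s by (intro power_mono) auto
  also have "exp (s / 4) ^ 4 = exp s" using exp_of_nat_mult[of 4 "s / 4"] by simp
  finally have "s ^ 4 \<le> 256 * exp s" by (simp add: power_divide)
  then have "s ^ 4 * exp (- s) * exp (- s) \<le> 256 * exp s * exp (- s) * exp (- s)"
    by (intro mult_right_mono) auto
  also have "\<dots> = 256 * exp (- s)" by (simp add: exp_minus)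
  finally have "(s\<^sup>2 * exp (- s))\<^sup>2 \<le> 256 * exp (- s)"
    by (simp add: power2_eq_square power4_eq_xxxx)
  then show ?thesis using True by (simp add: flat_exp_dpoly_1 flat_exp_1 s_def)
qed (simp add: flat_exp_dpoly_1 flat_exp_1)

lemma sq_minus_inner_pos_iff: "0 < r \<Longrightarrow> 0 < r\<^sup>2 - (x - c) \<bullet> (x - c) \<longleftrightarrow> x \<in> ball c r"
  for r :: real
proof -
  assume "0 < r"
  have "(x - c) \<bullet> (x - c) = (dist c x)\<^sup>2"
    by (simp add: dist_norm norm_minus_commute[of c x] power2_norm_eq_inner)
  moreover have "(dist c x)\<^sup>2 < r\<^sup>2 \<longleftrightarrow> dist c x < r"
    using \<open>0 < r\<close> power_less_imp_less_base[of "dist c x" 2 r] power_strict_mono[of "dist c x" r 2]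
    by auto
  ultimately show ?thesis by simp
qed

lemma bump_pos_iff: "0 < r \<Longrightarrow> 0 < bump c r x \<longleftrightarrow> x \<in> ball c r"
  using sq_minus_inner_pos_iff[of r x c] by (simp add: bump_def flat_exp_1)

lemma bump_nonneg: "0 \<le> bump c r x"
  and bump_le_1: "bump c r x \<le> 1"
  by (simp_all add: bump_def flat_exp_1)

lemma bump_eq_0: "0 < r \<Longrightarrow> x \<notin> ball c r \<Longrightarrow> bump c r x = 0"
  using bump_pos_iff[of r c x] bump_nonneg[of c r x] by simp

lemma bump_mult_le:
  assumes "0 < r" "x \<in> ball c r \<Longrightarrow> a \<le> b"
  shows "a * bump c r x \<le> b * bump c r x"
proof (cases "x \<in> ball c r")
  case True
  then show ?thesis using assms(2) bump_nonneg[of c r x] by (simp add: mult_right_mono)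
next
  case False
  then show ?thesis using bump_eq_0[OF assms(1) False] by simp
qed

lemma smooth_fun_bump: "smooth_fun (bump c r)"
  unfolding bump_def[abs_def] by (rule smooth_fun_bump_algebra[OF bump_algebra.flat_exp])

lemma continuous_on_bump: "continuous_on S (bump c r)"
  unfolding bump_def[abs_def]
  by (intro continuous_at_imp_continuous_on ballI has_derivative_continuous[OF flat_exp_sphere_has_derivative])

lemma test_fun_bump:
  assumes "0 < r" "cball c r \<subseteq> \<Omega>"
  shows "test_fun \<Omega> (bump c r)"
proof -
  have "bump c r x \<noteq> 0 \<longleftrightarrow> x \<in> ball c r" for x
    unfolding bump_pos_iff[OF assms(1), symmetric] using bump_nonneg[of c r x] by linarith
  then have supp: "{x. bump c r x \<noteq> 0} = ball c r" by blast
  show ?thesis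
    unfolding test_fun_def supp closure_ball[OF assms(1)] using assms(2) smooth_fun_bump by simp
qed

lemma grad_bump:
  "grad (bump c r) x = (- 2 * flat_exp (flat_exp_dpoly 1) (r\<^sup>2 - (x - c) \<bullet> (x - c))) *\<^sub>R (x - c)"
proof -
  define k where "k = - 2 * flat_exp (flat_exp_dpoly 1) (r\<^sup>2 - (x - c) \<bullet> (x - c))"
  have "frechet_derivative (bump c r) (at x) = (\<lambda>v. k * ((x - c) \<bullet> v))"
    using frechet_derivative_at[OF flat_exp_sphere_has_derivative[of 1 r c x]]
    by (simp add: bump_def[abs_def] k_def)
  then have "grad (bump c r) x = k *\<^sub>R (\<Sum>i\<in>Basis. ((x - c) \<bullet> i) *\<^sub>R i)"
    by (simp add: grad_def scaleR_sum_right inner_commute)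
  then show ?thesis by (simp add: euclidean_representation k_def)
qed

lemma inner_grad_bump_le:
  assumes "0 < r" "0 < m"
  shows "\<bar>g \<bullet> grad (bump c r) x\<bar> \<le> m * (norm g)\<^sup>2 * bump c r x + 256 * r\<^sup>2 / m"
proof (cases "x \<in> ball c r")
  case False
  then show ?thesis
    using assms sq_minus_inner_pos_iff[of r x c] bump_nonneg[of c r x] by (simp add: grad_bump flat_exp_dpoly_1)
next
  case True
  define b where "b = flat_exp (flat_exp_dpoly 1) (r\<^sup>2 - (x - c) \<bullet> (x - c))"
  define a where "a = norm g"
  have b: "0 \<le> b" "b\<^sup>2 \<le> 256 * bump c r x"
    unfolding b_def bump_def by (simp add: flat_exp_dpoly_1) (rule flat_exp_dpoly_1_sq_le)
  have a: "0 \<le> a" by (simp add: a_def)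
  have xc: "norm (x - c) \<le> r" using True by (simp add: dist_norm norm_minus_commute)
  have "\<bar>g \<bullet> grad (bump c r) x\<bar> \<le> a * norm (grad (bump c r) x)"
    unfolding a_def by (rule Cauchy_Schwarz_ineq2)
  also have "\<dots> = a * (2 * b * norm (x - c))"
    using b by (simp add: grad_bump b_def)
  also have "\<dots> \<le> a * (2 * b * r)"
    using a b xc by (intro mult_left_mono) auto
  also have "\<dots> \<le> (m / 256) * a\<^sup>2 * b\<^sup>2 + 256 * r\<^sup>2 / m"
  proof -
    have "0 \<le> (m / 256 * a * b - r)\<^sup>2 * (256 / m)" using assms by simp
    also have "\<dots> = (m / 256) * a\<^sup>2 * b\<^sup>2 + 256 * r\<^sup>2 / m - a * (2 * b * r)"
      using assms by (simp add: power2_eq_square field_simps)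
    finally show ?thesis by simp
  qed
  also have "\<dots> \<le> (m / 256) * a\<^sup>2 * (256 * bump c r x) + 256 * r\<^sup>2 / m"
    using b assms by (intro add_right_mono mult_left_mono) auto
  finally show ?thesis by (simp add: a_def)
qed

section \<open>Integrals of derivatives of compactly supported functions\<close>

lemma has_derivative_eq_0_outside_support:
  assumes "closed K" "\<And>y. y \<notin> K \<Longrightarrow> f y = 0" "x \<notin> K" "(f has_derivative f') (at x)"
  shows "f' = (\<lambda>_. 0)"
proof -
  have "open (- K)" using assms(1) by auto
  have "((\<lambda>_. 0) has_derivative (\<lambda>_. 0)) (at x)" by simp
  then have "(f has_derivative (\<lambda>_. 0)) (at x)"
    by (rule has_derivative_transform_within_open[OF _ \<open>open (- K)\<close>]) (use assms in auto)
  then show ?thesis using assms(4) has_derivative_unique by blast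
qed

lemma continuous_compact_support_bounded:
  fixes f :: "'a::topological_space \<Rightarrow> real"
  assumes "continuous_on UNIV f" "compact K" "\<And>x. x \<notin> K \<Longrightarrow> f x = 0"
  obtains M where "\<And>x. \<bar>f x\<bar> \<le> M"
proof -
  have "compact (f ` K)"
    using assms by (meson compact_continuous_image continuous_on_subset top_greatest)
  then obtain M where "\<And>y. y \<in> f ` K \<Longrightarrow> norm y \<le> M"
    using compact_imp_bounded bounded_iff by metis
  then have "\<bar>f x\<bar> \<le> max M 0" for x
    using assms(3) by (cases "x \<in> K") (auto simp: le_max_iff_disj)
  then show ?thesis using that by blast
qed

lemma integrable_continuous_compact_support:
  fixes f :: "'a::euclidean_space \<Rightarrow> real"
  assumes "continuous_on UNIV f" "compact K" "\<And>x. x \<notin> K \<Longrightarrow> f x = 0"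
  shows "integrable lborel f"
proof -
  have "integrable lborel (\<lambda>x. indicator K x *\<^sub>R f x)"
    using assms(1,2) by (intro borel_integrable_compact) (auto intro: continuous_on_subset)
  moreover have "(\<lambda>x. indicator K x *\<^sub>R f x) = f"
    by (rule ext) (use assms(3) in \<open>auto simp: indicator_def\<close>)
  ultimately show ?thesis by simp
qed

lemma lborel_integral_translate:
  fixes f :: "'a::euclidean_space \<Rightarrow> real"
  assumes "integrable lborel f"
  shows "integrable lborel (\<lambda>x. f (x + a))" "(LINT x|lborel. f (x + a)) = (LINT x|lborel. f x)"
proof -
  have m: "(+) a \<in> lborel \<rightarrow>\<^sub>M borel" by simp
  have f: "f \<in> borel_measurable borel"
    using borel_measurable_integrable[OF assms] by simp
  have "integrable lborel (\<lambda>x. f (a + x))"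
    using integrable_distr_eq[OF m f] assms by (simp add: lborel_distr_plus)
  moreover have "(LINT x|lborel. f (a + x)) = (LINT x|lborel. f x)"
    using integral_distr[OF m f] by (simp add: lborel_distr_plus)
  ultimately show "integrable lborel (\<lambda>x. f (x + a))" "(LINT x|lborel. f (x + a)) = (LINT x|lborel. f x)"
    by (simp_all add: add.commute)
qed

lemma has_real_derivative_along_line:
  fixes g :: "'a::euclidean_space \<Rightarrow> real"
  assumes "(g has_derivative g') (at (x + z *\<^sub>R v))"
  shows "((\<lambda>\<tau>. g (x + \<tau> *\<^sub>R v)) has_real_derivative g' v) (at z)"
proof -
  have "((\<lambda>\<tau>. x + \<tau> *\<^sub>R v) has_derivative (\<lambda>\<tau>. \<tau> *\<^sub>R v)) (at z)"
    by (auto intro!: derivative_eq_intros)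
  from has_derivative_compose[OF this assms]
  have "((\<lambda>\<tau>. g (x + \<tau> *\<^sub>R v)) has_derivative (\<lambda>\<tau>. g' (\<tau> *\<^sub>R v))) (at z)" .
  moreover have "(\<lambda>\<tau>. g' (\<tau> *\<^sub>R v)) = (*) (g' v)"
    using linear_scale[OF has_derivative_linear[OF assms]] by (auto simp: mult.commute)
  ultimately show ?thesis
    unfolding has_field_derivative_def by simp
qed

lemma difference_quotient_le:
  fixes g :: "'a::euclidean_space \<Rightarrow> real"
  assumes "\<And>x. (g has_derivative g' x) (at x)" "\<And>y. \<bar>g' y v\<bar> \<le> M" "0 < t"
  shows "\<bar>(g (x + t *\<^sub>R v) - g x) / t\<bar> \<le> M"
proof -
  have "((\<lambda>\<tau>. g (x + \<tau> *\<^sub>R v)) has_real_derivative g' (x + z *\<^sub>R v) v) (at z)" for z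
    by (rule has_real_derivative_along_line[OF assms(1)])
  then obtain z where "g (x + t *\<^sub>R v) - g (x + 0 *\<^sub>R v) = (t - 0) * g' (x + z *\<^sub>R v) v"
    using MVT2[of 0 t "\<lambda>\<tau>. g (x + \<tau> *\<^sub>R v)" "\<lambda>z. g' (x + z *\<^sub>R v) v"] assms(3) by blast
  then show ?thesis using assms(2,3) by simp
qed

lemma difference_quotient_LIMSEQ:
  fixes g :: "'a::euclidean_space \<Rightarrow> real"
  assumes "(g has_derivative g') (at x)" "t \<longlonglongrightarrow> 0" "\<And>n. t n \<noteq> 0"
  shows "(\<lambda>n. (g (x + t n *\<^sub>R v) - g x) / t n) \<longlonglongrightarrow> g' v"
proof -
  have "((\<lambda>\<tau>. g (x + \<tau> *\<^sub>R v)) has_real_derivative g' v) (at 0)"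
    using has_real_derivative_along_line[of g g' x 0 v] assms(1) by simp
  then have "((\<lambda>\<tau>. (g (x + \<tau> *\<^sub>R v) - g x) / \<tau>) \<longlongrightarrow> g' v) (at 0)"
    unfolding has_field_derivative_iff by simp
  moreover have "filterlim t (at 0) sequentially"
    using assms(2,3) by (simp add: filterlim_at)
  ultimately show ?thesis
    by (rule filterlim_compose)
qed

lemma eq_0_outside_ball_translate:
  fixes g :: "'a::real_normed_vector \<Rightarrow> real"
  assumes "\<And>y. g y \<noteq> 0 \<Longrightarrow> norm y \<le> B" "B + norm v < norm x" "\<bar>t\<bar> \<le> 1"
  shows "g x = 0" "g (x + t *\<^sub>R v) = 0"
proof -
  have "norm (t *\<^sub>R v) \<le> norm v"
    using assms(3) by (simp add: mult_left_le_one_le)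
  then have "B < norm (x + t *\<^sub>R v)" "B < norm x"
    using assms(2) norm_diff_ineq[of x "t *\<^sub>R v"] norm_ge_zero[of v] by linarith+
  then show "g x = 0" "g (x + t *\<^sub>R v) = 0"
    using assms(1) by (meson not_le)+
qed

lemma lborel_integral_difference_quotient_LIMSEQ:
  fixes g :: "'a::euclidean_space \<Rightarrow> real"
  assumes deriv: "\<And>x. (g has_derivative g' x) (at x)"
    and cont: "continuous_on UNIV (\<lambda>x. g' x v)"
    and K: "compact K" and zero: "\<And>x. x \<notin> K \<Longrightarrow> g x = 0"
    and t: "t \<longlonglongrightarrow> 0" "\<And>n. 0 < t n" "\<And>n. t n \<le> 1"
  shows "(\<lambda>n. LINT x|lborel. (g (x + t n *\<^sub>R v) - g x) / t n) \<longlonglongrightarrow> (LINT x|lborel. g' x v)"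
proof -
  have g_int: "integrable lborel g"
    using deriv by (intro integrable_continuous_compact_support[OF _ K zero]
        continuous_at_imp_continuous_on ballI has_derivative_continuous)
  have "g' x v = 0" if "x \<notin> K" for x
    using has_derivative_eq_0_outside_support[OF compact_imp_closed[OF K] zero that deriv] by simp
  then obtain M where M: "\<And>x. \<bar>g' x v\<bar> \<le> M"
    using continuous_compact_support_bounded[OF cont K] by blast
  obtain B where B: "\<And>x. x \<in> K \<Longrightarrow> norm x \<le> B"
    using compact_imp_bounded[OF K] bounded_pos by metis
  define K' where "K' = cball (0::'a) (B + norm v)"
  show ?thesis
  proof (rule integral_dominated_convergence[where w="\<lambda>x. M * indicator K' x"])
    show "(\<lambda>x. g' x v) \<in> borel_measurable lborel"
      using cont by (simp add: borel_measurable_continuous_onI)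
    show "(\<lambda>x. (g (x + t n *\<^sub>R v) - g x) / t n) \<in> borel_measurable lborel" for n
      using borel_measurable_integrable[OF lborel_integral_translate(1)[OF g_int]]
        borel_measurable_integrable[OF g_int] by measurable
    show "integrable lborel (\<lambda>x. M * indicator K' x)"
      unfolding K'_def by (intro integrable_mult_right integrable_real_indicator emeasure_bounded_finite) auto
    show "AE x in lborel. (\<lambda>n. (g (x + t n *\<^sub>R v) - g x) / t n) \<longlonglongrightarrow> g' x v"
      using deriv t(1,2) by (intro AE_I2 difference_quotient_LIMSEQ) (auto simp: less_imp_neq[symmetric])
    show "AE x in lborel. norm ((g (x + t n *\<^sub>R v) - g x) / t n) \<le> M * indicator K' x" for n
    proof (rule AE_I2)
      fix x
      show "norm ((g (x + t n *\<^sub>R v) - g x) / t n) \<le> M * indicator K' x"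
      proof (cases "x \<in> K'")
        case True
        then show ?thesis using difference_quotient_le[OF deriv M t(2)] by simp
      next
        case False
        then have "g x = 0" "g (x + t n *\<^sub>R v) = 0"
          using eq_0_outside_ball_translate[of g B v x "t n"] B zero t(2,3)[of n] by (auto simp: K'_def)
        with False show ?thesis by simp
      qed
    qed
  qed
qed

text \<open>Translation invariance makes the integrals of the difference quotients vanish.\<close>
lemma lborel_integral_derivative_eq_0:
  fixes g :: "'a::euclidean_space \<Rightarrow> real"
  assumes deriv: "\<And>x. (g has_derivative g' x) (at x)"
    and cont: "continuous_on UNIV (\<lambda>x. g' x v)"
    and K: "compact K" and zero: "\<And>x. x \<notin> K \<Longrightarrow> g x = 0"
  shows "(LINT x|lborel. g' x v) = 0"
proof -
  define t where "t n = inverse (real (Suc n))" for n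
  have t: "t \<longlonglongrightarrow> 0" "0 < t n" "t n \<le> 1" for n
    unfolding t_def[abs_def] by (rule LIMSEQ_inverse_real_of_nat) (simp_all add: field_simps)
  have g_int: "integrable lborel g"
    using deriv by (intro integrable_continuous_compact_support[OF _ K zero]
        continuous_at_imp_continuous_on ballI has_derivative_continuous)
  have "(\<lambda>n. LINT x|lborel. (g (x + t n *\<^sub>R v) - g x) / t n) = (\<lambda>n. 0)"
    using lborel_integral_translate[OF g_int] g_int by (intro ext) simp
  with lborel_integral_difference_quotient_LIMSEQ[OF deriv cont K zero t]
  have "(\<lambda>n. 0) \<longlonglongrightarrow> (LINT x|lborel. g' x v)" by simp
  then show ?thesis by (simp add: LIMSEQ_const_iff)
qed

lemma AE_lebesgue_on_iff:
  "\<Omega> \<in> sets lebesgue \<Longrightarrow> (AE x in lebesgue_on \<Omega>. P x) \<longleftrightarrow> (AE x in lebesgue. x \<in> \<Omega> \<longrightarrow> P x)"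
  using AE_restrict_space_iff[of \<Omega> lebesgue P] by simp

lemma AE_lebesgue_on_if_AE:
  assumes "\<Omega> \<in> sets lebesgue" "AE x in lebesgue. P x"
  shows "AE x in lebesgue_on \<Omega>. P x"
  using assms(2) unfolding AE_lebesgue_on_iff[OF assms(1)] by (rule eventually_mono) simp

lemma AE_mono_subset:
  "A \<subseteq> B \<Longrightarrow> AE x in M. x \<in> B \<longrightarrow> P x \<Longrightarrow> AE x in M. x \<in> A \<longrightarrow> P x"
  by (erule eventually_mono) blast

lemma not_AE_if_emeasure_pos:
  assumes "0 < emeasure M {x \<in> A. P x}"
  shows "\<not> (AE x in M. x \<in> A \<longrightarrow> \<not> P x)"
proof
  have sets: "{x \<in> A. P x} \<in> sets M"
    using assms emeasure_notin_sets by force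
  assume "AE x in M. x \<in> A \<longrightarrow> \<not> P x"
  then obtain N where N: "{x \<in> space M. \<not> (x \<in> A \<longrightarrow> \<not> P x)} \<subseteq> N" "emeasure M N = 0" "N \<in> sets M"
    by (rule AE_E)
  have "{x \<in> A. P x} \<subseteq> N"
    using N(1) sets.sets_into_space[OF sets] by blast
  then have "emeasure M {x \<in> A. P x} \<le> emeasure M N"
    using N(3) by (rule emeasure_mono)
  with N(2) assms show False by simp
qed

text \<open>The open ball is a countable union of concentric smaller balls.\<close>
lemma not_AE_in_smaller_ball:
  fixes M :: "'a::metric_space measure"
  assumes "\<not> (AE x in M. x \<in> ball c R \<longrightarrow> \<not> P x)"
  obtains r where "0 < r" "r < R" "\<not> (AE x in M. x \<in> ball c r \<longrightarrow> \<not> P x)"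
proof -
  define r where "r n = R - inverse (real (Suc n))" for n
  have union: "x \<in> ball c R \<longleftrightarrow> (\<exists>n. x \<in> ball c (r n))" for x
  proof
    assume "x \<in> ball c R"
    then obtain n where "inverse (real (Suc n)) < R - dist c x"
      using reals_Archimedean[of "R - dist c x"] by auto
    then have "x \<in> ball c (r n)" by (simp add: r_def)
    then show "\<exists>n. x \<in> ball c (r n)" ..
  next
    assume "\<exists>n. x \<in> ball c (r n)"
    then obtain n where "dist c x < r n" by auto
    moreover have "0 < inverse (real (Suc n))" by simp
    ultimately have "dist c x < R" unfolding r_def by linarith
    then show "x \<in> ball c R" by simp
  qed
  have "\<not> (AE x in M. \<forall>n. x \<in> ball c (r n) \<longrightarrow> \<not> P x)"
  proof
    assume "AE x in M. \<forall>n. x \<in> ball c (r n) \<longrightarrow> \<not> P x"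
    then have "AE x in M. x \<in> ball c R \<longrightarrow> \<not> P x"
      by (rule eventually_mono) (use union in blast)
    with assms show False by contradiction
  qed
  then obtain n where n: "\<not> (AE x in M. x \<in> ball c (r n) \<longrightarrow> \<not> P x)"
    unfolding AE_all_countable by blast
  moreover have "0 < r n"
  proof (rule ccontr)
    assume "\<not> 0 < r n"
    then have "ball c (r n) = {}" by auto
    with n show False by simp
  qed
  moreover have "r n < R" by (simp add: r_def)
  ultimately show ?thesis using that by blast
qed

lemma set_integral_lebesgue_on:
  fixes f :: "'a::euclidean_space \<Rightarrow> real"
  assumes "\<Omega> \<in> sets lebesgue"
  shows "(LINT x:\<Omega>|lebesgue. f x) = integral\<^sup>L (lebesgue_on \<Omega>) f"
  unfolding set_lebesgue_integral_def using integral_restrict_space[of \<Omega> lebesgue f] assms by simp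

lemma integrable_lebesgue_on_continuous:
  fixes f :: "'a::euclidean_space \<Rightarrow> real"
  assumes "bounded \<Omega>" "\<Omega> \<in> sets lebesgue" "continuous_on UNIV f"
  shows "integrable (lebesgue_on \<Omega>) f"
proof -
  have L: "\<Omega> \<in> lmeasurable" using assms(1,2) by (rule bounded_set_imp_lmeasurable)
  interpret finite_measure "lebesgue_on \<Omega>" using finite_measure_lebesgue_on[OF L] .
  have "compact (f ` closure \<Omega>)"
    using assms by (meson compact_closure compact_continuous_image continuous_on_subset top_greatest)
  then obtain B where B: "\<And>y. y \<in> f ` closure \<Omega> \<Longrightarrow> norm y \<le> B"
    using compact_imp_bounded bounded_iff by metis
  show ?thesis
  proof (rule integrable_const_bound[where B=B])
    show "AE x in lebesgue_on \<Omega>. norm (f x) \<le> B"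
      by (rule AE_I2) (use B closure_subset in auto)
    show "f \<in> borel_measurable (lebesgue_on \<Omega>)"
      using assms by (intro continuous_imp_measurable_on_sets_lebesgue) (auto intro: continuous_on_subset)
  qed
qed

lemma abs_powr_2: "\<bar>y::real\<bar> powr 2 = y\<^sup>2"
  by (cases "y = 0") (simp_all add: powr_numeral)

lemma Lp_on_2_continuous:
  fixes f :: "'a::euclidean_space \<Rightarrow> real"
  assumes "bounded \<Omega>" "\<Omega> \<in> sets lebesgue" "continuous_on UNIV f"
  shows "Lp_on \<Omega> 2 f"
  unfolding Lp_on_def abs_powr_2
proof
  show "f \<in> borel_measurable (lebesgue_on \<Omega>)"
    using assms by (intro continuous_imp_measurable_on_sets_lebesgue) (auto intro: continuous_on_subset)
  show "integrable (lebesgue_on \<Omega>) (\<lambda>x. (f x)\<^sup>2)"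
    using assms by (intro integrable_lebesgue_on_continuous continuous_intros)
qed

lemma Lp_on_integrable:
  fixes f :: "'a::euclidean_space \<Rightarrow> real"
  assumes q: "1 \<le> q" and f: "Lp_on \<Omega> q f" and L: "\<Omega> \<in> lmeasurable"
  shows "integrable (lebesgue_on \<Omega>) f"
proof -
  interpret finite_measure "lebesgue_on \<Omega>" using finite_measure_lebesgue_on[OF L] .
  have m: "f \<in> borel_measurable (lebesgue_on \<Omega>)"
    and i: "integrable (lebesgue_on \<Omega>) (\<lambda>x. 1 + \<bar>f x\<bar> powr q)"
    using f unfolding Lp_on_def by auto
  have "\<bar>f x\<bar> \<le> 1 + \<bar>f x\<bar> powr q" for x
  proof (cases "\<bar>f x\<bar> \<le> 1")
    case False
    then have "\<bar>f x\<bar> powr 1 \<le> \<bar>f x\<bar> powr q" using q by (intro powr_mono) auto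
    then show ?thesis using False by simp
  qed (simp add: add_increasing2)
  then show ?thesis
    by (intro Bochner_Integration.integrable_bound[OF i m] AE_I2) auto
qed

lemma Linf_on_AE_bounded:
  assumes "Linf_on \<Omega> f" "\<Omega> \<in> sets lebesgue"
  obtains C where "AE x in lebesgue_on \<Omega>. \<bar>f x\<bar> \<le> C"
  using assms unfolding Linf_on_def AE_lebesgue_on_iff[OF assms(2)] by blast

lemma integrable_Linf_on_mult:
  fixes f g :: "'a::euclidean_space \<Rightarrow> real"
  assumes f: "Linf_on \<Omega> f" and L: "\<Omega> \<in> sets lebesgue" and g: "integrable (lebesgue_on \<Omega>) g"
  shows "integrable (lebesgue_on \<Omega>) (\<lambda>x. g x * f x)"
proof -
  obtain C where C: "AE x in lebesgue_on \<Omega>. \<bar>f x\<bar> \<le> C"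
    using Linf_on_AE_bounded[OF f L] .
  show ?thesis
  proof (rule Bochner_Integration.integrable_bound[of _ "\<lambda>x. C * g x"])
    show "integrable (lebesgue_on \<Omega>) (\<lambda>x. C * g x)" using g by simp
    show "(\<lambda>x. g x * f x) \<in> borel_measurable (lebesgue_on \<Omega>)"
      using f g unfolding Linf_on_def by (auto intro: borel_measurable_times)
    show "AE x in lebesgue_on \<Omega>. norm (g x * f x) \<le> norm (C * g x)"
      using C
    proof eventually_elim
      case (elim x)
      have "\<bar>g x * f x\<bar> = \<bar>g x\<bar> * \<bar>f x\<bar>" by (simp add: abs_mult)
      also have "\<dots> \<le> \<bar>g x\<bar> * \<bar>C\<bar>" using elim by (intro mult_left_mono) auto
      also have "\<dots> = \<bar>C * g x\<bar>" by (simp add: abs_mult)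
      finally show ?case by simp
    qed
  qed
qed

lemma Linf_on_integrable:
  fixes f :: "'a::euclidean_space \<Rightarrow> real"
  assumes "Linf_on \<Omega> f" "\<Omega> \<in> lmeasurable"
  shows "integrable (lebesgue_on \<Omega>) f"
proof -
  interpret finite_measure "lebesgue_on \<Omega>" using finite_measure_lebesgue_on[OF assms(2)] .
  show ?thesis
    using integrable_Linf_on_mult[OF assms(1) fmeasurableD[OF assms(2)], of "\<lambda>_. 1"] by simp
qed

lemma integrable_of_pos_neg_parts:
  fixes h :: "'a::euclidean_space \<Rightarrow> real"
  assumes "1 \<le> q" "\<Omega> \<in> lmeasurable"
    and "Lp_on \<Omega> q (\<lambda>x. max (h x) 0)" "Linf_on \<Omega> (\<lambda>x. max (- h x) 0)"
  shows "integrable (lebesgue_on \<Omega>) h"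
proof -
  have "integrable (lebesgue_on \<Omega>) (\<lambda>x. max (h x) 0 - max (- h x) 0)"
    using Lp_on_integrable[OF assms(1,3,2)] Linf_on_integrable[OF assms(4,2)] by simp
  moreover have "(\<lambda>x. max (h x) 0 - max (- h x) 0) = h" by (auto simp: max_def)
  ultimately show ?thesis by simp
qed

lemma Linf_on_mult:
  assumes "Linf_on \<Omega> f" "Linf_on \<Omega> g"
  shows "Linf_on \<Omega> (\<lambda>x. f x * g x)"
proof -
  obtain C D where "AE x in lebesgue. x \<in> \<Omega> \<longrightarrow> \<bar>f x\<bar> \<le> C"
    and "AE x in lebesgue. x \<in> \<Omega> \<longrightarrow> \<bar>g x\<bar> \<le> D"
    using assms unfolding Linf_on_def by blast
  then have "AE x in lebesgue. x \<in> \<Omega> \<longrightarrow> \<bar>f x * g x\<bar> \<le> \<bar>C\<bar> * \<bar>D\<bar>"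
    by eventually_elim (auto simp: abs_mult intro: mult_mono)
  with assms show ?thesis
    unfolding Linf_on_def by (auto intro: borel_measurable_times)
qed

section \<open>Smooth functions and the space H_0^1\<close>

lemma smooth_funD:
  assumes "smooth_fun f"
  shows "(f has_derivative frechet_derivative f (at x)) (at x)"
    and "continuous_on UNIV f"
    and "continuous_on UNIV (\<lambda>x. frechet_derivative f (at x) v)"
proof -
  obtain F where F: "f \<in> F" "\<And>g. g \<in> F \<Longrightarrow> (\<forall>x. g differentiable (at x))"
    "\<And>g v. g \<in> F \<Longrightarrow> (\<lambda>x. frechet_derivative g (at x) v) \<in> F"
    using assms unfolding smooth_fun_def by blast
  have cont: "continuous_on UNIV g" if "g \<in> F" for g
    using F(2)[OF that] by (meson continuous_at_imp_continuous_on differentiable_imp_continuous_within)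
  show "(f has_derivative frechet_derivative f (at x)) (at x)"
    using F(1,2) frechet_derivative_works by blast
  show "continuous_on UNIV f"
    using cont[OF F(1)] .
  show "continuous_on UNIV (\<lambda>x. frechet_derivative f (at x) v)"
    using cont[OF F(3)[OF F(1)]] .
qed

lemma continuous_on_grad: "smooth_fun f \<Longrightarrow> continuous_on UNIV (grad f)"
  unfolding grad_def[abs_def] by (intro continuous_intros smooth_funD)

lemma grad_inner_Basis: "i \<in> Basis \<Longrightarrow> grad f x \<bullet> i = frechet_derivative f (at x) i"
  by (simp add: grad_def inner_sum_left inner_Basis if_distrib cong: if_cong)

text \<open>The partial derivatives of the compactly supported product \<open>f \<psi>\<close> integrate to zero.\<close>
lemma weak_grad_smooth_fun:
  fixes \<Omega> :: "'a::euclidean_space set"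
  assumes "open \<Omega>" "bounded \<Omega>" "smooth_fun f"
  shows "weak_grad \<Omega> f (grad f)"
  unfolding weak_grad_def
proof (intro allI impI ballI)
  fix \<psi> and i :: 'a
  assume \<psi>: "test_fun \<Omega> \<psi>" and i: "i \<in> Basis"
  have L: "\<Omega> \<in> sets lebesgue" using assms(1) by simp
  define K where "K = closure {x. \<psi> x \<noteq> 0}"
  have K: "compact K" "K \<subseteq> \<Omega>" and \<psi>_smooth: "smooth_fun \<psi>"
    using \<psi> unfolding test_fun_def K_def by auto
  note f = smooth_funD[OF assms(3)] and p = smooth_funD[OF \<psi>_smooth]
  have \<psi>0: "\<psi> x = 0" if "x \<notin> K" for x
    using that closure_subset[of "{x. \<psi> x \<noteq> 0}"] unfolding K_def by auto
  have d\<psi>0: "frechet_derivative \<psi> (at x) i = 0" if "x \<notin> K" for x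
    using has_derivative_eq_0_outside_support[OF compact_imp_closed[OF K(1)] \<psi>0 that p(1)] by simp
  define g' where "g' x v = f x * frechet_derivative \<psi> (at x) v + frechet_derivative f (at x) v * \<psi> x"
    for x v
  have c1: "continuous_on UNIV (\<lambda>x. f x * frechet_derivative \<psi> (at x) i)"
    by (rule continuous_on_mult[OF f(2) p(3)])
  have c2: "continuous_on UNIV (\<lambda>x. frechet_derivative f (at x) i * \<psi> x)"
    by (rule continuous_on_mult[OF f(3) p(2)])
  have g'_cont: "continuous_on UNIV (\<lambda>x. g' x i)"
    unfolding g'_def by (rule continuous_on_add[OF c1 c2])
  have outside: "g' x i = 0" if "x \<notin> \<Omega>" for x
  proof -
    have "x \<notin> K" using K(2) that by blast
    then show ?thesis by (simp add: g'_def \<psi>0 d\<psi>0)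
  qed
  have "integral\<^sup>L (lebesgue_on \<Omega>) (\<lambda>x. f x * frechet_derivative \<psi> (at x) i)
      + integral\<^sup>L (lebesgue_on \<Omega>) (\<lambda>x. frechet_derivative f (at x) i * \<psi> x)
      = integral\<^sup>L (lebesgue_on \<Omega>) (\<lambda>x. g' x i)"
    unfolding g'_def
    by (rule Bochner_Integration.integral_add[symmetric];
        rule integrable_lebesgue_on_continuous[OF assms(2) L]) (fact c1 c2)+
  also have "\<dots> = (LINT x|lebesgue. indicator \<Omega> x *\<^sub>R g' x i)"
    using integral_restrict_space[of \<Omega> lebesgue "\<lambda>x. g' x i"] L by simp
  also have "\<dots> = (LINT x|lebesgue. g' x i)"
    using outside by (intro Bochner_Integration.integral_cong) (auto simp: indicator_def)
  also have "\<dots> = (LINT x|lborel. g' x i)"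
    using borel_measurable_continuous_onI[OF g'_cont] by (intro integral_completion) simp
  also have "\<dots> = 0"
  proof (rule lborel_integral_derivative_eq_0[of "\<lambda>x. f x * \<psi> x" g'])
    show "((\<lambda>x. f x * \<psi> x) has_derivative g' x) (at x)" for x
      unfolding g'_def[abs_def] by (rule has_derivative_mult[OF f(1) p(1)])
  qed (use g'_cont K(1) \<psi>0 in auto)
  finally show "(LINT x:\<Omega>|lebesgue. f x * frechet_derivative \<psi> (at x) i)
      = - (LINT x:\<Omega>|lebesgue. (grad f x \<bullet> i) * \<psi> x)"
    using L by (simp add: set_integral_lebesgue_on grad_inner_Basis[OF i] eq_neg_iff_add_eq_0)
qed

lemma test_fun_H01:
  fixes \<Omega> :: "'a::euclidean_space set"
  assumes "open \<Omega>" "bounded \<Omega>" "test_fun \<Omega> \<phi>"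
  shows "H01 \<Omega> \<phi> (grad \<phi>)"
proof -
  have L: "\<Omega> \<in> sets lebesgue" using assms(1) by simp
  have \<phi>: "smooth_fun \<phi>" using assms(3) by (simp add: test_fun_def)
  note grad_cont = continuous_on_grad[OF \<phi>]
  show ?thesis
    unfolding H01_def
  proof (intro conjI ballI exI[of _ "\<lambda>k. \<phi>"] allI)
    show "Lp_on \<Omega> 2 \<phi>"
      using assms(2) L smooth_funD(2)[OF \<phi>] by (rule Lp_on_2_continuous)
    show "grad \<phi> \<in> borel_measurable (lebesgue_on \<Omega>)"
      using grad_cont L by (intro continuous_imp_measurable_on_sets_lebesgue) (auto intro: continuous_on_subset)
    show "Lp_on \<Omega> 2 (\<lambda>x. grad \<phi> x \<bullet> i)" for i
      using assms(2) L continuous_on_inner[OF grad_cont continuous_on_const] by (rule Lp_on_2_continuous)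
    show "weak_grad \<Omega> \<phi> (grad \<phi>)"
      using assms(1,2) \<phi> by (rule weak_grad_smooth_fun)
    show "test_fun \<Omega> \<phi>" by (fact assms(3))
    have "(\<lambda>k::nat. LINT x:\<Omega>|lebesgue. (\<phi> x - \<phi> x)\<^sup>2 + (norm (grad \<phi> x - grad \<phi> x))\<^sup>2)
        = (\<lambda>k. 0)"
      by simp
    then show "(\<lambda>k::nat. LINT x:\<Omega>|lebesgue. (\<phi> x - \<phi> x)\<^sup>2 + (norm (grad \<phi> x - grad \<phi> x))\<^sup>2)
        \<longlonglongrightarrow> 0"
      by (simp only: tendsto_const)
  qed
qed

lemma H01_norm_sq_integrable:
  fixes G :: "'a \<Rightarrow> 'a::euclidean_space"
  assumes "H01 \<Omega> u G"
  shows "integrable (lebesgue_on \<Omega>) (\<lambda>x. (norm (G x))\<^sup>2)"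
proof -
  have "integrable (lebesgue_on \<Omega>) (\<lambda>x. \<Sum>i\<in>Basis. (G x \<bullet> i)\<^sup>2)"
  proof (rule Bochner_Integration.integrable_sum)
    fix i :: 'a assume "i \<in> Basis"
    then have "Lp_on \<Omega> 2 (\<lambda>x. G x \<bullet> i)" using assms unfolding H01_def by blast
    then show "integrable (lebesgue_on \<Omega>) (\<lambda>x. (G x \<bullet> i)\<^sup>2)" unfolding Lp_on_def abs_powr_2 by blast
  qed
  moreover have "(norm (G x))\<^sup>2 = (\<Sum>i\<in>Basis. (G x \<bullet> i)\<^sup>2)" for x
    unfolding power2_norm_eq_inner euclidean_inner[of "G x" "G x"] by (simp add: power2_eq_square)
  ultimately show ?thesis by simp
qed

section \<open>Testing the equation with the bump\<close>

lemma Linf_on_bump: "\<Omega> \<in> sets lebesgue \<Longrightarrow> Linf_on \<Omega> (bump c r)"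
  unfolding Linf_on_def using bump_nonneg[of c r] bump_le_1[of c r]
  by (auto intro!: continuous_imp_measurable_on_sets_lebesgue continuous_on_bump exI[of _ 1] AE_I2)

lemma integral_bump_mono:
  fixes f g :: "'a::euclidean_space \<Rightarrow> real"
  assumes "0 < r" "\<Omega> \<in> sets lebesgue"
    and "integrable (lebesgue_on \<Omega>) (\<lambda>x. f x * bump c r x)" "integrable (lebesgue_on \<Omega>) (\<lambda>x. g x * bump c r x)"
    and "AE x in lebesgue. x \<in> ball c r \<longrightarrow> f x \<le> g x"
  shows "(\<integral>x. f x * bump c r x \<partial>lebesgue_on \<Omega>) \<le> (\<integral>x. g x * bump c r x \<partial>lebesgue_on \<Omega>)"
proof (rule integral_mono_AE[OF assms(3,4)])
  show "AE x in lebesgue_on \<Omega>. f x * bump c r x \<le> g x * bump c r x"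
    using AE_lebesgue_on_if_AE[OF assms(2,5)]
  proof (rule eventually_mono)
    fix x assume "x \<in> ball c r \<longrightarrow> f x \<le> g x"
    then show "f x * bump c r x \<le> g x * bump c r x" by (intro bump_mult_le[OF assms(1)]) auto
  qed
qed

lemma integral_bump_pos:
  fixes f :: "'a::euclidean_space \<Rightarrow> real"
  assumes r: "0 < r" and L: "\<Omega> \<in> sets lebesgue" and ball: "ball c r \<subseteq> \<Omega>"
    and f: "integrable (lebesgue_on \<Omega>) (\<lambda>x. f x * bump c r x)"
    and nonneg: "AE x in lebesgue. x \<in> ball c r \<longrightarrow> 0 \<le> f x"
    and pos: "\<not> (AE x in lebesgue. x \<in> ball c r \<longrightarrow> \<not> 0 < f x)"
  shows "0 < (\<integral>x. f x * bump c r x \<partial>lebesgue_on \<Omega>)"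
proof (rule ccontr)
  have nn: "AE x in lebesgue_on \<Omega>. 0 \<le> f x * bump c r x"
    using AE_lebesgue_on_if_AE[OF L nonneg]
  proof (rule eventually_mono)
    fix x assume "x \<in> ball c r \<longrightarrow> 0 \<le> f x"
    then show "0 \<le> f x * bump c r x" using bump_mult_le[OF r, of x c 0 "f x"] by simp
  qed
  assume "\<not> 0 < (\<integral>x. f x * bump c r x \<partial>lebesgue_on \<Omega>)"
  then have "(\<integral>x. f x * bump c r x \<partial>lebesgue_on \<Omega>) = 0"
    using integral_nonneg_AE[OF nn] by linarith
  then have "AE x in lebesgue_on \<Omega>. f x * bump c r x = 0"
    using integral_nonneg_eq_0_iff_AE[OF f nn] by simp
  then have "AE x in lebesgue. x \<in> \<Omega> \<longrightarrow> f x * bump c r x = 0"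
    unfolding AE_lebesgue_on_iff[OF L] .
  then have "AE x in lebesgue. x \<in> ball c r \<longrightarrow> \<not> 0 < f x"
  proof (rule eventually_mono)
    fix x assume x: "x \<in> \<Omega> \<longrightarrow> f x * bump c r x = 0"
    show "x \<in> ball c r \<longrightarrow> \<not> 0 < f x"
    proof
      assume "x \<in> ball c r"
      then have "x \<in> \<Omega>" "0 < bump c r x" using ball bump_pos_iff[OF r] by auto
      then show "\<not> 0 < f x" using x by simp
    qed
  qed
  with pos show False by contradiction
qed

lemma integral_inner_grad_bump_le:
  fixes \<Omega> :: "'a::euclidean_space set" and G :: "'a \<Rightarrow> 'a"
  assumes \<Omega>: "\<Omega> \<in> lmeasurable" and r: "0 < r" and m: "0 < m"
    and G: "G \<in> borel_measurable (lebesgue_on \<Omega>)" "integrable (lebesgue_on \<Omega>) (\<lambda>x. (norm (G x))\<^sup>2)"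
    and mu: "Linf_on \<Omega> mu" and mu_ball: "AE x in lebesgue. x \<in> ball c r \<longrightarrow> m \<le> mu x"
  shows "(\<integral>x. G x \<bullet> grad (bump c r) x \<partial>lebesgue_on \<Omega>)
      \<le> (\<integral>x. mu x * (norm (G x))\<^sup>2 * bump c r x \<partial>lebesgue_on \<Omega>) + 256 * r\<^sup>2 / m * measure lebesgue \<Omega>"
proof -
  let ?w = "bump c r" and ?K = "256 * r\<^sup>2 / m"
  have L: "\<Omega> \<in> sets lebesgue" using \<Omega> by (rule fmeasurableD)
  interpret finite_measure "lebesgue_on \<Omega>" using finite_measure_lebesgue_on[OF \<Omega>] .
  have key: "\<bar>g \<bullet> grad ?w x\<bar> \<le> m * (norm g)\<^sup>2 * ?w x + ?K" for g x
    by (rule inner_grad_bump_le[OF r m])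
  have I_mu: "integrable (lebesgue_on \<Omega>) (\<lambda>x. mu x * (norm (G x))\<^sup>2 * ?w x)"
    using integrable_Linf_on_mult[OF Linf_on_mult[OF mu Linf_on_bump[OF L]] L G(2)] by (simp add: mult_ac)
  have I_grad: "integrable (lebesgue_on \<Omega>) (\<lambda>x. G x \<bullet> grad ?w x)"
  proof (rule Bochner_Integration.integrable_bound[of _ "\<lambda>x. m * (norm (G x))\<^sup>2 + ?K"])
    show "integrable (lebesgue_on \<Omega>) (\<lambda>x. m * (norm (G x))\<^sup>2 + ?K)"
      using G(2) by simp
    have "grad ?w \<in> borel_measurable (lebesgue_on \<Omega>)"
      using L continuous_on_grad[OF smooth_fun_bump]
      by (intro continuous_imp_measurable_on_sets_lebesgue) (auto intro: continuous_on_subset)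
    with G(1) show "(\<lambda>x. G x \<bullet> grad ?w x) \<in> borel_measurable (lebesgue_on \<Omega>)"
      by (rule borel_measurable_inner)
    have "\<bar>G x \<bullet> grad ?w x\<bar> \<le> m * (norm (G x))\<^sup>2 + ?K" for x
    proof -
      have "m * (norm (G x))\<^sup>2 * ?w x \<le> m * (norm (G x))\<^sup>2"
        by (rule mult_left_le[OF bump_le_1]) (use m in simp)
      then show ?thesis using key[of "G x" x] by linarith
    qed
    then show "AE x in lebesgue_on \<Omega>. norm (G x \<bullet> grad ?w x) \<le> norm (m * (norm (G x))\<^sup>2 + ?K)"
      using m by (intro AE_I2) simp
  qed
  have "(\<integral>x. G x \<bullet> grad ?w x \<partial>lebesgue_on \<Omega>)
      \<le> (\<integral>x. mu x * (norm (G x))\<^sup>2 * ?w x + ?K \<partial>lebesgue_on \<Omega>)"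
  proof (rule integral_mono_AE[OF I_grad])
    show "integrable (lebesgue_on \<Omega>) (\<lambda>x. mu x * (norm (G x))\<^sup>2 * ?w x + ?K)"
      using I_mu by simp
    show "AE x in lebesgue_on \<Omega>. G x \<bullet> grad ?w x \<le> mu x * (norm (G x))\<^sup>2 * ?w x + ?K"
      using AE_lebesgue_on_if_AE[OF L mu_ball]
    proof (rule eventually_mono)
      fix x assume "x \<in> ball c r \<longrightarrow> m \<le> mu x"
      then have "m * (norm (G x))\<^sup>2 * ?w x \<le> mu x * (norm (G x))\<^sup>2 * ?w x"
        by (intro bump_mult_le[OF r] mult_right_mono) auto
      then show "G x \<bullet> grad ?w x \<le> mu x * (norm (G x))\<^sup>2 * ?w x + ?K"
        using key[of "G x" x] by linarith
    qed
  qed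
  also have "\<dots> = (\<integral>x. mu x * (norm (G x))\<^sup>2 * ?w x \<partial>lebesgue_on \<Omega>) + ?K * measure lebesgue \<Omega>"
    using I_mu L by (simp add: measure_restrict_space)
  finally show ?thesis .
qed

lemma solution_tested_with_bump:
  fixes \<Omega> :: "'a::euclidean_space set"
  assumes \<Omega>: "open \<Omega>" "bounded \<Omega>" and r: "0 < r" "cball c r \<subseteq> \<Omega>" and m: "0 < m"
    and cp: "integrable (lebesgue_on \<Omega>) cp" and cm: "cm \<in> borel_measurable (lebesgue_on \<Omega>)"
    and h: "integrable (lebesgue_on \<Omega>) h" and mu: "Linf_on \<Omega> mu"
    and cm_ball: "AE x in lebesgue. x \<in> ball c r \<longrightarrow> cm x = 0"
    and mu_ball: "AE x in lebesgue. x \<in> ball c r \<longrightarrow> m \<le> mu x"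
    and u: "is_solution \<Omega> cp cm mu h lam u"
  shows "lam * (\<integral>x. cp x * u x * bump c r x \<partial>lebesgue_on \<Omega>) + (\<integral>x. h x * bump c r x \<partial>lebesgue_on \<Omega>)
      \<le> 256 * r\<^sup>2 / m * measure lebesgue \<Omega>"
proof -
  let ?w = "bump c r"
  have L: "\<Omega> \<in> sets lebesgue" using \<Omega>(1) by simp
  have Lm: "\<Omega> \<in> lmeasurable" using \<Omega>(2) L by (rule bounded_set_imp_lmeasurable)
  obtain G where uH: "H01 \<Omega> u G" and uL: "Linf_on \<Omega> u"
    and weak: "\<And>\<phi> G\<phi>. H01 \<Omega> \<phi> G\<phi> \<and> Linf_on \<Omega> \<phi> \<Longrightarrow> (LINT x:\<Omega>|lebesgue. G x \<bullet> G\<phi> x)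
        = (LINT x:\<Omega>|lebesgue. ((lam * cp x - cm x) * u x + mu x * (norm (G x))\<^sup>2 + h x) * \<phi> x)"
    using u unfolding is_solution_def by blast
  have wL: "Linf_on \<Omega> ?w" using L by (rule Linf_on_bump)
  have G: "G \<in> borel_measurable (lebesgue_on \<Omega>)" "integrable (lebesgue_on \<Omega>) (\<lambda>x. (norm (G x))\<^sup>2)"
    using uH H01_norm_sq_integrable[OF uH] unfolding H01_def by blast+
  have meas: "cp \<in> borel_measurable (lebesgue_on \<Omega>)" "h \<in> borel_measurable (lebesgue_on \<Omega>)"
      "u \<in> borel_measurable (lebesgue_on \<Omega>)" "mu \<in> borel_measurable (lebesgue_on \<Omega>)"
      "?w \<in> borel_measurable (lebesgue_on \<Omega>)"
    using borel_measurable_integrable[OF cp] borel_measurable_integrable[OF h] uL mu wL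
    unfolding Linf_on_def by blast+
  have I_cp: "integrable (lebesgue_on \<Omega>) (\<lambda>x. cp x * u x * ?w x)"
    using integrable_Linf_on_mult[OF wL L integrable_Linf_on_mult[OF uL L cp]] .
  have I_mu: "integrable (lebesgue_on \<Omega>) (\<lambda>x. mu x * (norm (G x))\<^sup>2 * ?w x)"
    using integrable_Linf_on_mult[OF Linf_on_mult[OF mu wL] L G(2)] by (simp add: mult_ac)
  have I_h: "integrable (lebesgue_on \<Omega>) (\<lambda>x. h x * ?w x)"
    using integrable_Linf_on_mult[OF wL L h] .
  have "(\<integral>x. G x \<bullet> grad ?w x \<partial>lebesgue_on \<Omega>)
      = (\<integral>x. ((lam * cp x - cm x) * u x + mu x * (norm (G x))\<^sup>2 + h x) * ?w x \<partial>lebesgue_on \<Omega>)"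
    using weak[of ?w "grad ?w"] test_fun_H01[OF \<Omega> test_fun_bump[OF r]] wL L
    by (simp add: set_integral_lebesgue_on)
  also have "\<dots> = (\<integral>x. lam * (cp x * u x * ?w x) + mu x * (norm (G x))\<^sup>2 * ?w x + h x * ?w x \<partial>lebesgue_on \<Omega>)"
  proof (rule integral_cong_AE)
    show "(\<lambda>x. ((lam * cp x - cm x) * u x + mu x * (norm (G x))\<^sup>2 + h x) * ?w x) \<in> borel_measurable (lebesgue_on \<Omega>)"
      using meas cm G(1) by measurable
    show "(\<lambda>x. lam * (cp x * u x * ?w x) + mu x * (norm (G x))\<^sup>2 * ?w x + h x * ?w x) \<in> borel_measurable (lebesgue_on \<Omega>)"
      using I_cp I_mu I_h by (intro borel_measurable_integrable) simp
    show "AE x in lebesgue_on \<Omega>. ((lam * cp x - cm x) * u x + mu x * (norm (G x))\<^sup>2 + h x) * ?w x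
        = lam * (cp x * u x * ?w x) + mu x * (norm (G x))\<^sup>2 * ?w x + h x * ?w x"
      using AE_lebesgue_on_if_AE[OF L cm_ball]
    proof (rule eventually_mono)
      fix x assume "x \<in> ball c r \<longrightarrow> cm x = 0"
      then show "((lam * cp x - cm x) * u x + mu x * (norm (G x))\<^sup>2 + h x) * ?w x
          = lam * (cp x * u x * ?w x) + mu x * (norm (G x))\<^sup>2 * ?w x + h x * ?w x"
        using bump_eq_0[OF r(1), of x c] by (cases "x \<in> ball c r") (simp_all add: algebra_simps)
    qed
  qed
  also have "\<dots> = lam * (\<integral>x. cp x * u x * ?w x \<partial>lebesgue_on \<Omega>)
      + (\<integral>x. mu x * (norm (G x))\<^sup>2 * ?w x \<partial>lebesgue_on \<Omega>) + (\<integral>x. h x * ?w x \<partial>lebesgue_on \<Omega>)"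
    using I_cp I_mu I_h by simp
  finally show ?thesis
    using integral_inner_grad_bump_le[OF Lm r(1) m G mu mu_ball] by linarith
qed

lemma solution_above_tested_with_bump:
  fixes \<Omega> :: "'a::euclidean_space set"
  assumes \<Omega>: "open \<Omega>" "bounded \<Omega>" and r: "0 < r" "cball c r \<subseteq> \<Omega>" and m: "0 < m"
    and cp: "integrable (lebesgue_on \<Omega>) cp" "AE x in lebesgue. x \<in> ball c r \<longrightarrow> 0 \<le> cp x"
    and cm: "cm \<in> borel_measurable (lebesgue_on \<Omega>)"
    and h: "integrable (lebesgue_on \<Omega>) h" and mu: "Linf_on \<Omega> mu"
    and cm_ball: "AE x in lebesgue. x \<in> ball c r \<longrightarrow> cm x = 0"
    and mu_ball: "AE x in lebesgue. x \<in> ball c r \<longrightarrow> m \<le> mu x"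
    and lam: "0 \<le> lam" and u: "is_solution \<Omega> cp cm mu h lam u"
    and u0: "Linf_on \<Omega> u0" and above: "AE x in lebesgue. x \<in> ball c r \<longrightarrow> u0 x \<le> u x"
  shows "lam * (\<integral>x. cp x * u0 x * bump c r x \<partial>lebesgue_on \<Omega>) + (\<integral>x. h x * bump c r x \<partial>lebesgue_on \<Omega>)
      \<le> 256 * r\<^sup>2 / m * measure lebesgue \<Omega>"
proof -
  have L: "\<Omega> \<in> sets lebesgue" using \<Omega>(1) by simp
  have uL: "Linf_on \<Omega> u" using u unfolding is_solution_def by blast
  have cpw: "integrable (lebesgue_on \<Omega>) (\<lambda>x. cp x * v x * bump c r x)" if "Linf_on \<Omega> v" for v
    using integrable_Linf_on_mult[OF Linf_on_bump[OF L] L integrable_Linf_on_mult[OF that L cp(1)]] .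
  have "AE x in lebesgue. x \<in> ball c r \<longrightarrow> cp x * u0 x \<le> cp x * u x"
    using cp(2) above by eventually_elim (auto intro: mult_left_mono)
  then have "(\<integral>x. cp x * u0 x * bump c r x \<partial>lebesgue_on \<Omega>)
      \<le> (\<integral>x. cp x * u x * bump c r x \<partial>lebesgue_on \<Omega>)"
    using integral_bump_mono[OF r(1) L cpw[OF u0] cpw[OF uL]] by simp
  then have "lam * (\<integral>x. cp x * u0 x * bump c r x \<partial>lebesgue_on \<Omega>)
      \<le> lam * (\<integral>x. cp x * u x * bump c r x \<partial>lebesgue_on \<Omega>)"
    using lam by (rule mult_left_mono)
  with solution_tested_with_bump[OF \<Omega> r m cp(1) cm h mu cm_ball mu_ball u] show ?thesis
    by linarith
qed

theorem lemma5p1: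
  fixes \<Omega> :: "'a::euclidean_space set"
    and cp cm mu h u0 :: "'a \<Rightarrow> real"
    and q \<epsilon> \<mu>1 R :: real and xbar :: 'a
  assumes dim: "DIM('a) \<ge> 2"
    and dom: "open \<Omega>" "connected \<Omega>" "bounded \<Omega>" "\<Omega> \<noteq> {}"
    and bdry: "C11_boundary \<Omega>"
    and q: "q > real DIM('a) / 2"
    and cp_L: "Lp_on \<Omega> q cp" and cm_L: "Lp_on \<Omega> q cm"
    and hp_L: "Lp_on \<Omega> q (\<lambda>x. max (h x) 0)"
    and mu_L: "Linf_on \<Omega> mu" and hm_L: "Linf_on \<Omega> (\<lambda>x. max (- h x) 0)"
    and cp_nn: "AE x in lebesgue. x \<in> \<Omega> \<longrightarrow> cp x \<ge> 0"
    and cm_nn: "AE x in lebesgue. x \<in> \<Omega> \<longrightarrow> cm x \<ge> 0"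
    and cpcm: "AE x in lebesgue. x \<in> \<Omega> \<longrightarrow> cp x * cm x = 0"
    and Op: "emeasure lebesgue (ess_supp \<Omega> cp) > 0"
    and eps: "\<epsilon> > 0" and mu1: "\<mu>1 > 0"
    and mu_ge: "AE x in lebesgue. x \<in> \<Omega> \<longrightarrow> mu x \<ge> \<mu>1"
    and cm_zero: "AE x in lebesgue. x \<in> {y \<in> \<Omega>. infdist y (ess_supp \<Omega> cp) < \<epsilon>} \<longrightarrow> cm x = 0"
    and u0: "is_solution \<Omega> cp cm mu h 0 u0"
    and xbar: "xbar \<in> \<Omega>" and R: "R > 0" and ball: "ball xbar R \<subseteq> \<Omega>"
    and cpu0_ge: "AE x in lebesgue. x \<in> ball xbar R \<longrightarrow> cp x * u0 x \<ge> 0"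
    and cpu0_pos: "emeasure lebesgue {x \<in> ball xbar R. cp x * u0 x > 0} > 0"
    and cm_ball: "AE x in lebesgue. x \<in> ball xbar R \<longrightarrow> cm x = 0"
    and mu_ball: "AE x in lebesgue. x \<in> ball xbar R \<longrightarrow> mu x \<ge> 0"
  shows "\<exists>\<Lambda>>0. \<forall>lam\<ge>\<Lambda>. \<not> (\<exists>u. is_solution \<Omega> cp cm mu h lam u
            \<and> (AE x in lebesgue. x \<in> ball xbar R \<longrightarrow> u x \<ge> u0 x))"
proof -
  have L: "\<Omega> \<in> sets lebesgue" and Lm: "\<Omega> \<in> lmeasurable"
    using dom by (simp_all add: bounded_set_imp_lmeasurable)
  have "1 \<le> q" using q dim by (simp add: field_simps)
  then have cp: "integrable (lebesgue_on \<Omega>) cp" and h: "integrable (lebesgue_on \<Omega>) h"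
    using Lp_on_integrable[OF _ cp_L Lm] integrable_of_pos_neg_parts[OF _ Lm hp_L hm_L] by blast+
  have cm: "cm \<in> borel_measurable (lebesgue_on \<Omega>)" using cm_L unfolding Lp_on_def by blast
  have u0L: "Linf_on \<Omega> u0" using u0 unfolding is_solution_def by blast
  obtain r where r: "0 < r" "r < R" and pos: "\<not> (AE x in lebesgue. x \<in> ball xbar r \<longrightarrow> \<not> 0 < cp x * u0 x)"
    using not_AE_in_smaller_ball[OF not_AE_if_emeasure_pos[OF cpu0_pos]] by blast
  then have sub: "ball xbar r \<subseteq> ball xbar R" "ball xbar r \<subseteq> \<Omega>" "cball xbar r \<subseteq> \<Omega>"
    using ball by auto
  define a where "a = (\<integral>x. cp x * u0 x * bump xbar r x \<partial>lebesgue_on \<Omega>)"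
  define K where "K = 256 * r\<^sup>2 / \<mu>1 * measure lebesgue \<Omega> - (\<integral>x. h x * bump xbar r x \<partial>lebesgue_on \<Omega>)"
  have "0 < a"
    unfolding a_def using integral_bump_pos[OF r(1) L sub(2) _ AE_mono_subset[OF sub(1) cpu0_ge] pos]
      integrable_Linf_on_mult[OF Linf_on_bump[OF L] L integrable_Linf_on_mult[OF u0L L cp]] by blast
  show ?thesis
  proof (intro exI[of _ "max 1 (K / a + 1)"] conjI allI impI notI)
    fix lam assume lam: "max 1 (K / a + 1) \<le> lam"
    assume "\<exists>u. is_solution \<Omega> cp cm mu h lam u \<and> (AE x in lebesgue. x \<in> ball xbar R \<longrightarrow> u0 x \<le> u x)"
    then obtain u where "is_solution \<Omega> cp cm mu h lam u"
      and "AE x in lebesgue. x \<in> ball xbar R \<longrightarrow> u0 x \<le> u x" by blast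
    from solution_above_tested_with_bump[OF dom(1,3) r(1) sub(3) mu1 cp AE_mono_subset[OF sub(2) cp_nn] cm h
        mu_L AE_mono_subset[OF sub(1) cm_ball] AE_mono_subset[OF sub(2) mu_ge] _ this(1) u0L
        AE_mono_subset[OF sub(1) this(2)]]
    have "lam * a \<le> K" using lam unfolding a_def K_def by linarith
    moreover have "K < lam * a" using lam \<open>0 < a\<close> by (simp add: field_simps)
    ultimately show False by simp
  qed simp
qed

end
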